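(* Let $H$ be a simple hypergraph with $s=e(H)$ edges and fractional cover number $\rho^*=\rho^*(H)$. If $\rho^*<s$, then there is a constant $c=c(H)$ such that $\mathcal{E}_H(k)\leq c\,k^{(s-1)/(s-\rho^* )}$ for all positive integers $k$.
   Context: A fractional cover of a hypergraph $H$ is a function $\phi:E(H)\to[0,1]$ with $\sum_{e\ni v}\phi(e)\geq 1$ for every $v\in V(H)$; $\rho^*(H)$ is the minimum of $\sum_{e\in E(H)}\phi(e)$ over fractional covers. For hypergraphs $G,H$, $\operatorname{ex}(G,H)$ is the maximum number of edges of a subhypergraph of $G$ containing no copy of $H$, and $\mathcal{E}_H(k):=\sup\{e(G): G\text{ a simple hypergraph with }\operatorname{ex}(G,H)<k\}$. Hypergraphs have no isolated vertices. *)

theory Defs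
  imports "HOL-Analysis.Analysis" "HOL-Library.Extended_Real"
begin

text \<open>A hypergraph is represented by its set of edges; since hypergraphs have no
  isolated vertices, the vertex set is the union of the edges. Representing edges
  as a set of sets makes the hypergraph simple (no repeated edges).\<close>

definition hypergraph :: "'a set set \<Rightarrow> bool" where
  "hypergraph E \<longleftrightarrow> finite E \<and> (\<forall>e\<in>E. finite e \<and> e \<noteq> {})"

definition hvertices :: "'a set set \<Rightarrow> 'a set" where
  "hvertices E = \<Union>E"

definition has_copy :: "'b set set \<Rightarrow> 'a set set \<Rightarrow> bool" where
  "has_copy H G \<longleftrightarrow> (\<exists>f. inj_on f (hvertices H) \<and> (\<forall>e\<in>H. f ` e \<in> G))"

definition ex_hyp :: "'a set set \<Rightarrow> 'b set set \<Rightarrow> nat" where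
  "ex_hyp G H = Max {card F | F. F \<subseteq> G \<and> \<not> has_copy H F}"

definition fractional_cover :: "'a set set \<Rightarrow> ('a set \<Rightarrow> real) \<Rightarrow> bool" where
  "fractional_cover H \<phi> \<longleftrightarrow>
     (\<forall>e\<in>H. 0 \<le> \<phi> e \<and> \<phi> e \<le> 1) \<and>
     (\<forall>v\<in>hvertices H. (\<Sum>e\<in>{e\<in>H. v \<in> e}. \<phi> e) \<ge> 1)"

definition frac_cover_number :: "'a set set \<Rightarrow> real" where
  "frac_cover_number H = Inf {(\<Sum>e\<in>H. \<phi> e) | \<phi>. fractional_cover H \<phi>}"

text \<open>\<open>\<E>_H(k)\<close>: supremum of e(G) over finite simple hypergraphs G with ex(G,H) < k.
  Host hypergraphs are taken on vertex type nat (every finite hypergraph can be relabelled).\<close>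
definition extremal_E :: "'b set set \<Rightarrow> nat \<Rightarrow> ereal" where
  "extremal_E H k = Sup {ereal (card G) | G :: nat set set. hypergraph G \<and> ex_hyp G H < k}"

end

theory Submission
  imports Defs
begin

text \<open>With a fractional cover \<phi> of H, Finner's generalisation of Hoelder's inequality bounds
  the number of copies of H in a host G with m edges by O(m^\<rho>*). A random set of t edges of G
  contains each copy with probability about (t/m)^s; deleting one edge of every surviving copy
  leaves an H-free subgraph with at least t - O(t^s m^(\<rho>* - s)) edges. For t of order
  m^((s - \<rho>*)/(s - 1)) this is at least t/2, so ex(G,H) < k forces m = O(k^((s - 1)/(s - \<rho>*))).\<close>

lemma weighted_arith_geom_mean:
  fixes x p :: "'a \<Rightarrow> real"
  assumes "finite S" "S \<noteq> {}" "\<And>i. i \<in> S \<Longrightarrow> x i \<ge> 0" "\<And>i. i \<in> S \<Longrightarrow> p i \<ge> 0"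
    and "sum p S = 1"
  shows "(\<Prod>i\<in>S. x i powr p i) \<le> (\<Sum>i\<in>S. p i * x i)"
proof (cases "\<exists>i\<in>S. x i = 0")
  case True
  then have "(\<Prod>i\<in>S. x i powr p i) = 0"
    using assms(1) by (metis powr_0 prod_zero_iff)
  moreover have "(\<Sum>i\<in>S. p i * x i) \<ge> 0"
    by (simp add: assms(3,4) sum_nonneg)
  ultimately show ?thesis by simp
next
  case False
  then have pos: "\<And>i. i \<in> S \<Longrightarrow> x i > 0"
    using assms(3) by fastforce
  have "(\<Sum>i\<in>S. p i * ln (x i)) \<le> ln (\<Sum>i\<in>S. p i *\<^sub>R x i)"
    by (intro concave_on_sum[OF assms(1,2) ln_concave]) (use assms pos in auto)
  moreover have "(\<Sum>i\<in>S. p i *\<^sub>R x i) > 0"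
  proof -
    obtain j where "j \<in> S" "p j > 0"
      using assms(4,5) by (metis less_eq_real_def sum.neutral zero_neq_one)
    then have "0 < p j * x j"
      using pos by simp
    also have "\<dots> \<le> (\<Sum>i\<in>S. p i * x i)"
      by (rule member_le_sum) (use assms pos \<open>j \<in> S\<close> in \<open>auto intro: less_imp_le\<close>)
    finally show ?thesis by simp
  qed
  ultimately have "exp (\<Sum>i\<in>S. p i * ln (x i)) \<le> (\<Sum>i\<in>S. p i *\<^sub>R x i)"
    by (metis exp_le_cancel_iff exp_ln)
  moreover have "exp (\<Sum>i\<in>S. p i * ln (x i)) = (\<Prod>i\<in>S. x i powr p i)"
    unfolding exp_sum[OF assms(1)]
  proof (rule prod.cong)
    fix i assume "i \<in> S"
    then show "exp (p i * ln (x i)) = x i powr p i"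
      using pos[of i] by (simp add: powr_def mult.commute)
  qed simp
  ultimately show ?thesis by simp
qed

lemma sum_prod_powr_le_one:
  fixes b :: "'j \<Rightarrow> 'u \<Rightarrow> real" and w :: "'j \<Rightarrow> real"
  assumes fJ: "finite J" and fU: "finite U" and w: "\<And>j. j \<in> J \<Longrightarrow> w j \<ge> 0"
    and wsum: "sum w J \<ge> 1" and b: "\<And>j y. j \<in> J \<Longrightarrow> y \<in> U \<Longrightarrow> b j y \<ge> 0"
    and bsum: "\<And>j. j \<in> J \<Longrightarrow> (\<Sum>y\<in>U. b j y) = 1"
  shows "(\<Sum>y\<in>U. \<Prod>j\<in>J. b j y powr w j) \<le> 1"
proof -
  define p where "p j = w j / sum w J" for j
  have p: "p j \<ge> 0" "p j \<le> w j" if "j \<in> J" for j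
    using w[OF that] wsum by (auto simp: p_def divide_le_eq mult_le_cancel_left1)
  have psum: "sum p J = 1"
    using wsum by (simp add: p_def sum_divide_distrib[symmetric])
  have b_le_1: "b j y \<le> 1" if "j \<in> J" "y \<in> U" for j y
    using member_le_sum[OF that(2), of "b j"] b[OF that(1)] bsum[OF that(1)] fU by simp
  have "(\<Sum>y\<in>U. \<Prod>j\<in>J. b j y powr w j) \<le> (\<Sum>y\<in>U. \<Sum>j\<in>J. p j * b j y)"
  proof (rule sum_mono)
    fix y assume y: "y \<in> U"
    have "(\<Prod>j\<in>J. b j y powr w j) \<le> (\<Prod>j\<in>J. b j y powr p j)"
      by (intro prod_mono conjI powr_mono') (use p b b_le_1 y in auto)
    also have "\<dots> \<le> (\<Sum>j\<in>J. p j * b j y)"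
      by (rule weighted_arith_geom_mean[OF fJ]) (use wsum psum p b y in auto)
    finally show "(\<Prod>j\<in>J. b j y powr w j) \<le> (\<Sum>j\<in>J. p j * b j y)" .
  qed
  also have "\<dots> = (\<Sum>j\<in>J. p j * (\<Sum>y\<in>U. b j y))"
    by (simp add: sum_distrib_left sum.swap[of _ U J])
  also have "\<dots> = 1"
    using bsum psum by simp
  finally show ?thesis .
qed

lemma sum_prod_powr_le_prod_sum_powr:
  fixes a :: "'j \<Rightarrow> 'u \<Rightarrow> real" and w :: "'j \<Rightarrow> real"
  assumes fJ: "finite J" and fU: "finite U" and w: "\<And>j. j \<in> J \<Longrightarrow> w j \<ge> 0"
    and wsum: "sum w J \<ge> 1" and a: "\<And>j y. j \<in> J \<Longrightarrow> y \<in> U \<Longrightarrow> a j y \<ge> 0"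
  shows "(\<Sum>y\<in>U. \<Prod>j\<in>J. a j y powr w j) \<le> (\<Prod>j\<in>J. (\<Sum>y\<in>U. a j y) powr w j)"
proof (cases "\<exists>j\<in>J. (\<Sum>y\<in>U. a j y) = 0")
  case True
  then obtain j where j: "j \<in> J" "\<And>y. y \<in> U \<Longrightarrow> a j y = 0"
    using sum_nonneg_eq_0_iff[OF fU] a by blast
  have "(\<Prod>i\<in>J. a i y powr w i) = 0" if "y \<in> U" for y
    using j that fJ by (metis powr_0 prod_zero_iff)
  then show ?thesis
    by (simp add: prod_nonneg)
next
  case False
  define A where "A j = (\<Sum>y\<in>U. a j y)" for j
  have A: "A j > 0" if "j \<in> J" for j
    using False that a unfolding A_def by (metis less_eq_real_def sum_nonneg)
  have "(\<Sum>y\<in>U. \<Prod>j\<in>J. a j y powr w j)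
      = (\<Prod>j\<in>J. A j powr w j) * (\<Sum>y\<in>U. \<Prod>j\<in>J. (a j y / A j) powr w j)"
  proof -
    have "a j y powr w j = A j powr w j * (a j y / A j) powr w j" if "j \<in> J" "y \<in> U" for j y
      using A[OF that(1)] a[OF that] by (simp add: powr_mult[symmetric])
    then show ?thesis
      unfolding sum_distrib_left prod.distrib[symmetric] by (intro sum.cong prod.cong) auto
  qed
  also have "\<dots> \<le> (\<Prod>j\<in>J. A j powr w j) * 1"
  proof (intro mult_left_mono sum_prod_powr_le_one[OF fJ fU w wsum] prod_nonneg)
    fix j assume j: "j \<in> J"
    show "(\<Sum>y\<in>U. a j y / A j) = 1"
      using A[OF j] by (simp add: sum_divide_distrib[symmetric] A_def)
    show "0 \<le> a j y / A j" if "y \<in> U" for y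
      using A[OF j] a[OF j that] by simp
  qed auto
  finally show ?thesis
    by (simp add: A_def)
qed

lemma sum_PiE_insert:
  assumes "v \<notin> A"
  shows "(\<Sum>x \<in> insert v A \<rightarrow>\<^sub>E U. h x) = (\<Sum>x \<in> A \<rightarrow>\<^sub>E U. \<Sum>y\<in>U. h (x(v := y)))"
proof -
  have "(\<Sum>x \<in> insert v A \<rightarrow>\<^sub>E U. h x) = (\<Sum>(y, x) \<in> U \<times> (A \<rightarrow>\<^sub>E U). h (x(v := y)))"
    unfolding PiE_insert_eq
    by (subst sum.reindex[OF inj_combinator[OF assms]]) (simp add: case_prod_unfold)
  also have "\<dots> = (\<Sum>y\<in>U. \<Sum>x \<in> A \<rightarrow>\<^sub>E U. h (x(v := y)))"
    by (simp add: sum.cartesian_product)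
  finally show ?thesis
    by (simp add: sum.swap[of _ U])
qed

lemma sum_fibre_prod_powr_le:
  fixes g :: "'i \<Rightarrow> ('v \<Rightarrow> 'u) \<Rightarrow> real" and w :: "'i \<Rightarrow> real"
  assumes fI: "finite I" and fU: "finite U" and w: "\<And>i. i \<in> I \<Longrightarrow> w i \<ge> 0"
    and cover: "sum w {i \<in> I. v \<in> E i} \<ge> 1"
    and g: "\<And>i x. i \<in> I \<Longrightarrow> g i x \<ge> 0"
    and local: "\<And>i x y. i \<in> I \<Longrightarrow> v \<notin> E i \<Longrightarrow> g i (x(v := y)) = g i x"
  shows "(\<Sum>y\<in>U. \<Prod>i\<in>I. g i (x(v := y)) powr w i)
    \<le> (\<Prod>i\<in>I. (if v \<in> E i then \<Sum>y\<in>U. g i (x(v := y)) else g i x) powr w i)"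
proof -
  define Iv where "Iv = {i \<in> I. v \<in> E i}"
  have split: "(\<Prod>i\<in>I. f i) = (\<Prod>i\<in>Iv. f i) * (\<Prod>i\<in>I - Iv. f i)" for f :: "'i \<Rightarrow> real"
    using prod.subset_diff[of Iv I f] fI by (simp add: Iv_def mult.commute)
  have "(\<Sum>y\<in>U. \<Prod>i\<in>I. g i (x(v := y)) powr w i)
      = (\<Sum>y\<in>U. \<Prod>i\<in>Iv. g i (x(v := y)) powr w i) * (\<Prod>i\<in>I - Iv. g i x powr w i)"
    unfolding split sum_distrib_right by (intro sum.cong prod.cong refl) (auto simp: Iv_def local)
  also have "\<dots> \<le> (\<Prod>i\<in>Iv. (\<Sum>y\<in>U. g i (x(v := y))) powr w i) * (\<Prod>i\<in>I - Iv. g i x powr w i)"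
    by (intro mult_right_mono sum_prod_powr_le_prod_sum_powr prod_nonneg)
      (use fI fU w cover g in \<open>auto simp: Iv_def\<close>)
  also have "\<dots> = (\<Prod>i\<in>I. (if v \<in> E i then \<Sum>y\<in>U. g i (x(v := y)) else g i x) powr w i)"
    unfolding split by (intro arg_cong2[where f = "(*)"] prod.cong) (auto simp: Iv_def)
  finally show ?thesis .
qed

lemma update_outside_restrict_eq:
  assumes "\<And>x. g x = g (restrict x E)" and "v \<notin> E"
  shows "g (x(v := y)) = g x"
proof -
  have "restrict (x(v := y)) E = restrict x E"
    using assms(2) by (auto simp: restrict_def)
  then show ?thesis
    using assms(1) by metis
qed

lemma update_restrict_eq:
  assumes "\<And>x. g x = g (restrict x E)"
  shows "g ((restrict x (E - {v}))(v := y)) = g (x(v := y))"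
proof -
  have "restrict ((restrict x (E - {v}))(v := y)) E = restrict (x(v := y)) E"
    by (auto simp: restrict_def)
  then show ?thesis
    using assms by metis
qed

text \<open>Finner's inequality, proved by summing out one coordinate at a time and applying
  Hoelder's inequality in each fibre.\<close>
lemma finner_inequality:
  fixes E :: "'i \<Rightarrow> 'v set" and g :: "'i \<Rightarrow> ('v \<Rightarrow> 'u) \<Rightarrow> real" and w :: "'i \<Rightarrow> real"
  assumes "finite V" "finite U" "finite I"
    and "\<And>i. i \<in> I \<Longrightarrow> E i \<subseteq> V" "\<And>i. i \<in> I \<Longrightarrow> w i \<ge> 0"
    and "\<And>v. v \<in> V \<Longrightarrow> sum w {i \<in> I. v \<in> E i} \<ge> 1"
    and "\<And>i x. i \<in> I \<Longrightarrow> g i x \<ge> 0"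
    and "\<And>i x. i \<in> I \<Longrightarrow> g i x = g i (restrict x (E i))"
  shows "(\<Sum>x \<in> V \<rightarrow>\<^sub>E U. \<Prod>i\<in>I. g i x powr w i) \<le> (\<Prod>i\<in>I. (\<Sum>x \<in> E i \<rightarrow>\<^sub>E U. g i x) powr w i)"
  using assms(1,4,6,7,8)
proof (induction V arbitrary: E g rule: finite_induct)
  case empty
  then have "E i = {}" if "i \<in> I" for i
    using that by blast
  then show ?case
    by (auto intro!: prod.cong)
next
  case (insert v V E g)
  note fU = assms(2) and fI = assms(3) and w = assms(5)
  define E' where "E' i = E i - {v}" for i
  define g' where "g' i x = (if v \<in> E i then \<Sum>y\<in>U. g i (x(v := y)) else g i x)" for i x
  have update_irrelevant: "g i (x(v := y)) = g i x" if "i \<in> I" "v \<notin> E i" for i x y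
    using update_outside_restrict_eq[where g = "g i", OF insert.prems(4)[OF that(1)] that(2)] .
  have "(\<Sum>x \<in> V \<rightarrow>\<^sub>E U. \<Prod>i\<in>I. g' i x powr w i) \<le> (\<Prod>i\<in>I. (\<Sum>x \<in> E' i \<rightarrow>\<^sub>E U. g' i x) powr w i)"
  proof (rule insert.IH)
    show "E' i \<subseteq> V" if "i \<in> I" for i
      using insert.prems(1)[OF that] by (auto simp: E'_def)
    show "1 \<le> sum w {i \<in> I. u \<in> E' i}" if "u \<in> V" for u
    proof -
      have "u \<noteq> v"
        using that insert.hyps(2) by blast
      then show ?thesis
        using insert.prems(2)[of u] that by (simp add: E'_def)
    qed
    show "0 \<le> g' i x" if "i \<in> I" for i x
      using insert.prems(3)[OF that] by (simp add: g'_def sum_nonneg)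
    show "g' i x = g' i (restrict x (E' i))" if i: "i \<in> I" for i x
    proof (cases "v \<in> E i")
      case True
      then show ?thesis
        using update_restrict_eq[where g = "g i", OF insert.prems(4)[OF i]] by (simp add: g'_def E'_def)
    next
      case False
      then have "E' i = E i"
        by (simp add: E'_def)
      then show ?thesis
        using False insert.prems(4)[OF i] by (simp only: g'_def if_False)
    qed
  qed
  moreover have "(\<Sum>x \<in> E' i \<rightarrow>\<^sub>E U. g' i x) = (\<Sum>x \<in> E i \<rightarrow>\<^sub>E U. g i x)" for i
    using sum_PiE_insert[of v "E' i" "g i" U] by (cases "v \<in> E i") (auto simp: E'_def g'_def insert_absorb)
  moreover have "(\<Sum>y\<in>U. \<Prod>i\<in>I. g i (x(v := y)) powr w i) \<le> (\<Prod>i\<in>I. g' i x powr w i)" for x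
    unfolding g'_def
    by (rule sum_fibre_prod_powr_le[OF fI fU w insert.prems(2) insert.prems(3) update_irrelevant]) auto
  then have "(\<Sum>x \<in> insert v V \<rightarrow>\<^sub>E U. \<Prod>i\<in>I. g i x powr w i) \<le> (\<Sum>x \<in> V \<rightarrow>\<^sub>E U. \<Prod>i\<in>I. g' i x powr w i)"
    unfolding sum_PiE_insert[OF insert.hyps(2)] by (rule sum_mono)
  ultimately show ?case
    by simp
qed

text \<open>The maps are extensional, so every copy of H in F is counted once per automorphism of H.\<close>
definition embeddings :: "'a set \<Rightarrow> 'b set set \<Rightarrow> 'a set set \<Rightarrow> ('b \<Rightarrow> 'a) set" where
  "embeddings U H F = {f \<in> \<Union>H \<rightarrow>\<^sub>E U. inj_on f (\<Union>H) \<and> (\<forall>e\<in>H. f ` e \<in> F)}"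

definition edge_power_sum :: "'b set set \<Rightarrow> real" where
  "edge_power_sum H = (\<Sum>e\<in>H. real (card e ^ card e))"

lemma edge_power_sum_ge_one:
  assumes "hypergraph H" "H \<noteq> {}"
  shows "edge_power_sum H \<ge> 1"
proof -
  obtain e where e: "e \<in> H"
    using assms(2) by blast
  have "finite e" "e \<noteq> {}" "finite H"
    using assms(1) e unfolding hypergraph_def by auto
  then have "1 \<le> real (card e ^ card e)"
    by (simp add: Suc_le_eq card_gt_0_iff)
  also have "\<dots> \<le> edge_power_sum H"
    unfolding edge_power_sum_def by (rule member_le_sum) (use e \<open>finite H\<close> in auto)
  finally show ?thesis .
qed

lemma card_maps_onto_edges_le:
  assumes fG: "finite G" and fe: "finite e" and fg: "\<And>g. g \<in> G \<Longrightarrow> finite g"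
  shows "card {x \<in> e \<rightarrow>\<^sub>E U. x ` e \<in> G} \<le> card e ^ card e * card G"
proof -
  let ?G = "{g \<in> G. card g \<le> card e}"
  have "{x \<in> e \<rightarrow>\<^sub>E U. x ` e \<in> G} \<subseteq> (\<Union>g\<in>?G. e \<rightarrow>\<^sub>E g)"
    using card_image_le[OF fe] by (force simp: PiE_def extensional_def)
  then have "card {x \<in> e \<rightarrow>\<^sub>E U. x ` e \<in> G} \<le> card (\<Union>g\<in>?G. e \<rightarrow>\<^sub>E g)"
    by (rule card_mono[rotated]) (use fG fe fg in \<open>auto intro!: finite_PiE\<close>)
  also have "\<dots> \<le> (\<Sum>g\<in>?G. card (e \<rightarrow>\<^sub>E g))"
    by (rule card_UN_le) (use fG in simp)
  also have "\<dots> \<le> (\<Sum>g\<in>?G. card e ^ card e)"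
    by (rule sum_mono) (simp add: card_PiE fe power_mono)
  also have "\<dots> \<le> card e ^ card e * card G"
    using card_mono[OF fG, of ?G] by simp
  finally show ?thesis .
qed

lemma card_embeddings_le_prod_powr:
  fixes H :: "'b set set" and G :: "'a set set"
  assumes hH: "hypergraph H" and fU: "finite U" and cover: "fractional_cover H \<phi>"
  shows "real (card (embeddings U H G))
    \<le> (\<Prod>e\<in>H. real (card {x \<in> e \<rightarrow>\<^sub>E U. x ` e \<in> G}) powr \<phi> e)"
proof -
  have fH: "finite H" and fV: "finite (\<Union>H)"
    using hH unfolding hypergraph_def by auto
  have \<phi>: "\<And>e. e \<in> H \<Longrightarrow> 0 \<le> \<phi> e" and covered: "\<And>v. v \<in> \<Union>H \<Longrightarrow> sum \<phi> {e \<in> H. v \<in> e} \<ge> 1"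
    using cover unfolding fractional_cover_def hvertices_def by auto
  define g where "g e x = (if x ` e \<in> G then 1 else 0 :: real)" for e and x :: "'b \<Rightarrow> 'a"
  have "real (card (embeddings U H G)) = (\<Sum>x \<in> embeddings U H G. \<Prod>e\<in>H. g e x powr \<phi> e)"
    by (simp add: g_def embeddings_def)
  also have "\<dots> \<le> (\<Sum>x \<in> \<Union>H \<rightarrow>\<^sub>E U. \<Prod>e\<in>H. g e x powr \<phi> e)"
    by (rule sum_mono2) (use fV fU in \<open>auto simp: embeddings_def intro!: finite_PiE prod_nonneg\<close>)
  also have "\<dots> \<le> (\<Prod>e\<in>H. (\<Sum>x \<in> e \<rightarrow>\<^sub>E U. g e x) powr \<phi> e)"
    by (rule finner_inequality[OF fV fU fH]) (use \<phi> covered in \<open>auto simp: g_def\<close>)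
  also have "\<dots> = (\<Prod>e\<in>H. real (card {x \<in> e \<rightarrow>\<^sub>E U. x ` e \<in> G}) powr \<phi> e)"
    unfolding g_def using hH fU
    by (intro prod.cong refl) (simp add: hypergraph_def sum.inter_filter[symmetric] finite_PiE)
  finally show ?thesis .
qed

lemma card_embeddings_le_cover:
  assumes hH: "hypergraph H" and Hne: "H \<noteq> {}" and fG: "finite G" and fg: "\<And>g. g \<in> G \<Longrightarrow> finite g"
    and cover: "fractional_cover H \<phi>"
  shows "real (card (embeddings (\<Union>G) H G)) \<le> edge_power_sum H ^ card H * real (card G) powr (\<Sum>e\<in>H. \<phi> e)"
proof (cases "G = {}")
  case True
  then show ?thesis
    using Hne by (simp add: embeddings_def)
next
  case False
  define K where "K = edge_power_sum H"
  define m where "m = real (card G)"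
  have fH: "finite H" and fe: "\<And>e. e \<in> H \<Longrightarrow> finite e"
    using hH unfolding hypergraph_def by auto
  have \<phi>: "\<And>e. e \<in> H \<Longrightarrow> 0 \<le> \<phi> e \<and> \<phi> e \<le> 1"
    using cover unfolding fractional_cover_def by auto
  have K: "K \<ge> 1"
    unfolding K_def by (rule edge_power_sum_ge_one[OF hH Hne])
  have m: "m \<ge> 1"
    using False fG unfolding m_def by (simp add: Suc_le_eq card_gt_0_iff)
  have "real (card (embeddings (\<Union>G) H G)) \<le> (\<Prod>e\<in>H. real (card {x \<in> e \<rightarrow>\<^sub>E \<Union>G. x ` e \<in> G}) powr \<phi> e)"
    by (rule card_embeddings_le_prod_powr[OF hH _ cover]) (use fG fg in auto)
  also have "\<dots> \<le> (\<Prod>e\<in>H. (K * m) powr \<phi> e)"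
  proof (intro prod_mono conjI powr_mono2)
    fix e assume e: "e \<in> H"
    have "real (card {x \<in> e \<rightarrow>\<^sub>E \<Union>G. x ` e \<in> G}) \<le> real (card e ^ card e) * m"
      using card_maps_onto_edges_le[OF fG fe[OF e] fg] unfolding m_def
      by (simp flip: of_nat_mult of_nat_power)
    also have "\<dots> \<le> K * m"
      unfolding K_def edge_power_sum_def
      by (intro mult_right_mono member_le_sum) (use e fH m in auto)
    finally show "real (card {x \<in> e \<rightarrow>\<^sub>E \<Union>G. x ` e \<in> G}) \<le> K * m" .
  qed (use \<phi> in auto)
  also have "\<dots> = K powr (\<Sum>e\<in>H. \<phi> e) * m powr (\<Sum>e\<in>H. \<phi> e)"
    using K m by (simp add: powr_sum powr_mult prod.distrib)
  also have "\<dots> \<le> K powr real (card H) * m powr (\<Sum>e\<in>H. \<phi> e)"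
    using K \<phi> sum_mono[of H \<phi> "\<lambda>_. 1"] by (intro mult_right_mono powr_mono) auto
  finally show ?thesis
    using K by (simp add: K_def m_def powr_realpow)
qed

lemma fractional_cover_one:
  assumes "hypergraph H"
  shows "fractional_cover H (\<lambda>_. 1)"
proof -
  have "1 \<le> (\<Sum>e\<in>{e \<in> H. v \<in> e}. 1 :: real)" if "v \<in> hvertices H" for v
    using that assms by (auto simp: hvertices_def hypergraph_def Suc_le_eq card_gt_0_iff)
  then show ?thesis
    unfolding fractional_cover_def by simp
qed

lemma cover_sums_nonempty:
  "hypergraph H \<Longrightarrow> {\<Sum>e\<in>H. \<phi> e | \<phi>. fractional_cover H \<phi>} \<noteq> {}"
  using fractional_cover_one by blast

lemma cover_sums_bdd_below: "bdd_below {\<Sum>e\<in>H. \<phi> e | \<phi>. fractional_cover H \<phi>}"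
  by (rule bdd_belowI[of _ 0]) (auto simp: fractional_cover_def intro!: sum_nonneg)

lemma frac_cover_number_le:
  "fractional_cover H \<phi> \<Longrightarrow> frac_cover_number H \<le> (\<Sum>e\<in>H. \<phi> e)"
  unfolding frac_cover_number_def by (rule cInf_lower[OF _ cover_sums_bdd_below]) blast

lemma le_frac_cover_number:
  assumes "hypergraph H" "\<And>\<phi>. fractional_cover H \<phi> \<Longrightarrow> t \<le> (\<Sum>e\<in>H. \<phi> e)"
  shows "t \<le> frac_cover_number H"
  unfolding frac_cover_number_def
  by (rule cInf_greatest[OF cover_sums_nonempty[OF assms(1)]]) (use assms(2) in blast)

lemma frac_cover_number_empty: "frac_cover_number {} = 0"
proof (rule antisym)
  show "frac_cover_number {} \<le> 0"
    using frac_cover_number_le[of "{}" "\<lambda>_. 1"] by (simp add: fractional_cover_def hvertices_def)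
  show "0 \<le> frac_cover_number {}"
    by (rule le_frac_cover_number) (simp_all add: hypergraph_def)
qed

lemma frac_cover_number_ge_one:
  assumes hH: "hypergraph H" and Hne: "H \<noteq> {}"
  shows "frac_cover_number H \<ge> 1"
proof (rule le_frac_cover_number[OF hH])
  fix \<phi> assume cover: "fractional_cover H \<phi>"
  obtain e v where "e \<in> H" "v \<in> e"
    using hH Hne unfolding hypergraph_def by blast
  then have "1 \<le> (\<Sum>e\<in>{e \<in> H. v \<in> e}. \<phi> e)"
    using cover unfolding fractional_cover_def hvertices_def by blast
  also have "\<dots> \<le> (\<Sum>e\<in>H. \<phi> e)"
    by (rule sum_mono2) (use hH cover in \<open>auto simp: hypergraph_def fractional_cover_def\<close>)
  finally show "1 \<le> (\<Sum>e\<in>H. \<phi> e)" .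
qed

lemma le_powr_frac_cover_number:
  assumes hH: "hypergraph H" and m: "m > 1" and A: "A > 0" and N: "N > 0"
    and bound: "\<And>\<phi>. fractional_cover H \<phi> \<Longrightarrow> N \<le> A * m powr (\<Sum>e\<in>H. \<phi> e)"
  shows "N \<le> A * m powr frac_cover_number H"
proof -
  have "log m (N / A) \<le> frac_cover_number H"
  proof (rule le_frac_cover_number[OF hH])
    fix \<phi> assume "fractional_cover H \<phi>"
    then have "N / A \<le> m powr (\<Sum>e\<in>H. \<phi> e)"
      using bound A by (simp add: divide_le_eq mult.commute)
    then show "log m (N / A) \<le> (\<Sum>e\<in>H. \<phi> e)"
      using m A N by (simp add: log_le_iff)
  qed
  then have "m powr log m (N / A) \<le> m powr frac_cover_number H"
    using m by (simp add: powr_mono)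
  then have "N / A \<le> m powr frac_cover_number H"
    using m A N by simp
  then show ?thesis
    using A by (simp add: divide_le_eq mult.commute)
qed

lemma card_embeddings_le_frac_cover_number:
  fixes H :: "'b set set" and G :: "'a set set"
  assumes hH: "hypergraph H" and Hne: "H \<noteq> {}" and fG: "finite G" and fg: "\<And>g. g \<in> G \<Longrightarrow> finite g"
  shows "real (card (embeddings (\<Union>G) H G))
    \<le> edge_power_sum H ^ card H * real (card G) powr frac_cover_number H"
proof -
  define N where "N = real (card (embeddings (\<Union>G) H G))"
  define A where "A = edge_power_sum H ^ card H"
  define m where "m = real (card G)"
  have A: "A > 0"
    using edge_power_sum_ge_one[OF hH Hne] by (simp add: A_def)
  have bound: "N \<le> A * m powr (\<Sum>e\<in>H. \<phi> e)" if "fractional_cover H \<phi>" for \<phi>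
    unfolding N_def A_def m_def by (rule card_embeddings_le_cover[OF hH Hne fG fg that])
  have "1 \<le> m \<or> N = 0"
  proof (rule disjCI)
    assume "N \<noteq> 0"
    moreover have "embeddings (\<Union>G) H G = {}" if "G = {}"
      using Hne that by (auto simp: embeddings_def)
    ultimately have "G \<noteq> {}"
      by (auto simp: N_def)
    then show "1 \<le> m"
      using fG by (simp add: m_def Suc_le_eq card_gt_0_iff)
  qed
  moreover have "N \<ge> 0"
    by (simp add: N_def)
  ultimately consider "N = 0" | "m = 1" | "N > 0" "m > 1"
    by (cases "N = 0"; cases "m = 1") auto
  then have "N \<le> A * m powr frac_cover_number H"
  proof cases
    case 1
    then show ?thesis
      using A by simp
  next
    case 2
    then show ?thesis
      using bound[OF fractional_cover_one[OF hH]] by simp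
  next
    case 3
    then show ?thesis
      using le_powr_frac_cover_number[OF hH _ A _ bound] by blast
  qed
  then show ?thesis
    by (simp add: N_def A_def m_def)
qed

lemma card_supersets_mult_choose:
  assumes fG: "finite G" and BG: "B \<subseteq> G" and tG: "t \<le> card G"
  shows "card {S. S \<subseteq> G \<and> card S = t \<and> B \<subseteq> S} * (card G choose card B)
    = (card G choose t) * (t choose card B)"
proof (cases "card B \<le> t")
  case False
  then have "{S. S \<subseteq> G \<and> card S = t \<and> B \<subseteq> S} = {}"
    using fG by (auto dest: card_mono[OF finite_subset])
  then have "card {S. S \<subseteq> G \<and> card S = t \<and> B \<subseteq> S} = 0"
    by (simp only: card.empty)
  then show ?thesis
    using False by simp
next
  case True
  have fB: "finite B"
    using fG BG finite_subset by blast
  have "{S. S \<subseteq> G \<and> card S = t \<and> B \<subseteq> S} = (\<lambda>X. X \<union> B) ` {X. X \<subseteq> G - B \<and> card X = t - card B}"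
  proof (intro equalityI subsetI)
    fix S assume "S \<in> {S. S \<subseteq> G \<and> card S = t \<and> B \<subseteq> S}"
    then have "S - B \<in> {X. X \<subseteq> G - B \<and> card X = t - card B}" "S = (S - B) \<union> B"
      using fB by (auto simp: card_Diff_subset)
    then show "S \<in> (\<lambda>X. X \<union> B) ` {X. X \<subseteq> G - B \<and> card X = t - card B}"
      by blast
  next
    fix S assume "S \<in> (\<lambda>X. X \<union> B) ` {X. X \<subseteq> G - B \<and> card X = t - card B}"
    then obtain X where X: "X \<subseteq> G - B" "card X = t - card B" "S = X \<union> B"
      by auto
    moreover have "card (X \<union> B) = t"
      using X fB True finite_subset[OF X(1)] fG by (subst card_Un_disjoint) auto
    ultimately show "S \<in> {S. S \<subseteq> G \<and> card S = t \<and> B \<subseteq> S}"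
      using BG by auto
  qed
  moreover have "inj_on (\<lambda>X. X \<union> B) {X. X \<subseteq> G - B \<and> card X = t - card B}"
    by (rule inj_onI) blast
  ultimately have "card {S. S \<subseteq> G \<and> card S = t \<and> B \<subseteq> S} = (card G - card B) choose (t - card B)"
    using fG BG fB by (simp add: card_image n_subsets card_Diff_subset)
  then show ?thesis
    using choose_mult[OF True tG] by (simp add: mult.commute)
qed

lemma embeddings_subset_eq:
  "S \<subseteq> G \<Longrightarrow> embeddings U H S = {f \<in> embeddings U H G. (\<lambda>e. f ` e) ` H \<subseteq> S}"
  unfolding embeddings_def by auto

lemma card_edge_image_embedding:
  assumes "f \<in> embeddings U H G"
  shows "card ((\<lambda>e. f ` e) ` H) = card H"
proof (rule card_image, rule inj_onI)
  fix e e' assume "e \<in> H" "e' \<in> H" "f ` e = f ` e'"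
  moreover have "inj_on f (\<Union>H)"
    using assms unfolding embeddings_def by auto
  ultimately show "e = e'"
    by (meson Union_upper inj_on_image_eq_iff)
qed

lemma finite_embeddings:
  "finite (\<Union>H) \<Longrightarrow> finite U \<Longrightarrow> finite (embeddings U H F)"
  unfolding embeddings_def by (rule finite_subset[of _ "\<Union>H \<rightarrow>\<^sub>E U"]) (auto intro: finite_PiE)

text \<open>Double counting: each embedding survives in exactly (m - s choose t - s) of the
  t-subsets.\<close>
lemma sum_card_embeddings_subsets:
  fixes H :: "'b set set" and G :: "'a set set"
  assumes hH: "hypergraph H" and fG: "finite G" and fg: "\<And>g. g \<in> G \<Longrightarrow> finite g"
    and tG: "t \<le> card G"
  shows "(\<Sum>S | S \<subseteq> G \<and> card S = t. card (embeddings (\<Union>G) H S)) * (card G choose card H)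
    = (card G choose t) * card (embeddings (\<Union>G) H G) * (t choose card H)"
proof -
  define T where "T = {S. S \<subseteq> G \<and> card S = t}"
  define C where "C = embeddings (\<Union>G) H G"
  define covers where "covers f S \<longleftrightarrow> (\<lambda>e. f ` e) ` H \<subseteq> S" for f and S :: "'a set set"
  have fC: "finite C"
    unfolding C_def by (rule finite_embeddings) (use hH fG fg in \<open>auto simp: hypergraph_def\<close>)
  have fT: "finite T"
    using fG by (simp add: T_def)
  have "embeddings (\<Union>G) H S = {f \<in> C. covers f S}" if "S \<in> T" for S
    using that embeddings_subset_eq[of S G "\<Union>G" H] by (simp add: T_def C_def covers_def)
  then have "(\<Sum>S\<in>T. card (embeddings (\<Union>G) H S)) = (\<Sum>S\<in>T. card {f \<in> C. covers f S})"
    by simp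
  also have "\<dots> = (\<Sum>f\<in>C. card {S \<in> T. covers f S})"
    by (rule sum_multicount_gen[OF fT fC]) simp
  finally have "(\<Sum>S\<in>T. card (embeddings (\<Union>G) H S)) * (card G choose card H)
      = (\<Sum>f\<in>C. card {S \<in> T. covers f S} * (card G choose card H))"
    by (simp add: sum_distrib_right)
  also have "\<dots> = (\<Sum>f\<in>C. (card G choose t) * (t choose card H))"
  proof (rule sum.cong[OF refl])
    fix f assume f: "f \<in> C"
    have "(\<lambda>e. f ` e) ` H \<subseteq> G"
      using f by (auto simp: C_def embeddings_def)
    moreover have "{S \<in> T. covers f S} = {S. S \<subseteq> G \<and> card S = t \<and> (\<lambda>e. f ` e) ` H \<subseteq> S}"
      by (auto simp: T_def covers_def)
    moreover have "card ((\<lambda>e. f ` e) ` H) = card H"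
      using card_edge_image_embedding f by (simp add: C_def)
    ultimately show "card {S \<in> T. covers f S} * (card G choose card H) = (card G choose t) * (t choose card H)"
      using card_supersets_mult_choose[OF fG _ tG, of "(\<lambda>e. f ` e) ` H"] by simp
  qed
  also have "\<dots> = (card G choose t) * card C * (t choose card H)"
    by simp
  finally show ?thesis
    by (simp only: T_def C_def)
qed

lemma exists_subset_few_embeddings:
  fixes H :: "'b set set" and G :: "'a set set"
  assumes hH: "hypergraph H" and fG: "finite G" and fg: "\<And>g. g \<in> G \<Longrightarrow> finite g"
    and tG: "t \<le> card G"
  shows "\<exists>S \<subseteq> G. card S = t \<and>
    card (embeddings (\<Union>G) H S) * (card G choose card H) \<le> card (embeddings (\<Union>G) H G) * (t choose card H)"
proof (rule ccontr)
  define T where "T = {S. S \<subseteq> G \<and> card S = t}"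
  define c where "c = card (embeddings (\<Union>G) H G) * (t choose card H)"
  assume "\<not> ?thesis"
  then have less: "c < card (embeddings (\<Union>G) H S) * (card G choose card H)" if "S \<in> T" for S
    using that by (auto simp: T_def c_def not_le)
  have "finite T" "card T = card G choose t"
    using fG n_subsets[OF fG] by (simp_all add: T_def)
  then have "T \<noteq> {}"
    using tG by auto
  have "card T * c = (\<Sum>S\<in>T. c)"
    by simp
  also have "\<dots> < (\<Sum>S\<in>T. card (embeddings (\<Union>G) H S) * (card G choose card H))"
    by (rule sum_strict_mono[OF \<open>finite T\<close> \<open>T \<noteq> {}\<close> less])
  also have "\<dots> = card T * c"
    unfolding sum_distrib_right[symmetric] T_def
    using sum_card_embeddings_subsets[OF hH fG fg tG] \<open>card T = card G choose t\<close>
    by (simp add: T_def c_def mult.assoc)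
  finally show False
    by simp
qed

lemma restrict_in_embeddings:
  assumes inj: "inj_on f (\<Union>H)" and edges: "\<And>e. e \<in> H \<Longrightarrow> f ` e \<in> F" and FG: "F \<subseteq> G"
  shows "restrict f (\<Union>H) \<in> embeddings (\<Union>G) H F"
proof -
  have img: "restrict f (\<Union>H) ` e = f ` e" if "e \<in> H" for e
    using that by (intro image_cong) auto
  have "f v \<in> \<Union>G" if "v \<in> \<Union>H" for v
    using that edges FG by blast
  then show ?thesis
    using inj edges img by (simp add: embeddings_def restrict_PiE_iff)
qed

lemma card_le_ex_hyp:
  assumes "finite G" "F \<subseteq> G" "\<not> has_copy H F"
  shows "card F \<le> ex_hyp G H"
  unfolding ex_hyp_def
proof (rule Max_ge)
  have "{card F | F. F \<subseteq> G \<and> \<not> has_copy H F} \<subseteq> card ` Pow G"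
    by auto
  then show "finite {card F | F. F \<subseteq> G \<and> \<not> has_copy H F}"
    using assms(1) by (rule finite_subset[OF _ finite_imageI[OF finite_Pow_iff[THEN iffD2]]])
  show "card F \<in> {card F | F. F \<subseteq> G \<and> \<not> has_copy H F}"
    using assms(2,3) by blast
qed

text \<open>Deleting the image of one fixed edge under every embedding into S destroys all
  copies of H.\<close>
lemma card_diff_card_embeddings_le_ex_hyp:
  fixes H :: "'b set set" and G :: "'a set set"
  assumes hH: "hypergraph H" and Hne: "H \<noteq> {}" and fG: "finite G" and fg: "\<And>g. g \<in> G \<Longrightarrow> finite g"
    and SG: "S \<subseteq> G"
  shows "card S - card (embeddings (\<Union>G) H S) \<le> ex_hyp G H"
proof -
  obtain e\<^sub>0 where e\<^sub>0: "e\<^sub>0 \<in> H"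
    using Hne by blast
  define R where "R = (\<lambda>f. f ` e\<^sub>0) ` embeddings (\<Union>G) H S"
  have fin: "finite (embeddings (\<Union>G) H S)"
    by (rule finite_embeddings) (use hH fG fg in \<open>auto simp: hypergraph_def\<close>)
  have "\<not> has_copy H (S - R)"
  proof
    assume "has_copy H (S - R)"
    then obtain f where inj: "inj_on f (\<Union>H)" and im: "\<And>e. e \<in> H \<Longrightarrow> f ` e \<in> S - R"
      unfolding has_copy_def hvertices_def by blast
    have "restrict f (\<Union>H) \<in> embeddings (\<Union>G) H S"
      using im by (intro restrict_in_embeddings[OF inj _ SG]) blast
    moreover have "restrict f (\<Union>H) ` e\<^sub>0 = f ` e\<^sub>0"
      using e\<^sub>0 by (intro image_cong) auto
    ultimately have "f ` e\<^sub>0 \<in> R"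
      unfolding R_def by (metis imageI)
    then show False
      using im[OF e\<^sub>0] by blast
  qed
  then have "card (S - R) \<le> ex_hyp G H"
    using SG by (intro card_le_ex_hyp[OF fG]) auto
  moreover have "card S - card (embeddings (\<Union>G) H S) \<le> card (S - R)"
    using diff_card_le_card_Diff[of R S] card_image_le[OF fin, of "\<lambda>f. f ` e\<^sub>0"] fin
    unfolding R_def by simp
  ultimately show ?thesis
    by linarith
qed

lemma ex_hyp_deletion_bound:
  fixes H :: "'b set set" and G :: "'a set set"
  assumes hH: "hypergraph H" and Hne: "H \<noteq> {}" and fG: "finite G" and fg: "\<And>g. g \<in> G \<Longrightarrow> finite g"
    and tG: "t \<le> card G"
  shows "(real t - real (ex_hyp G H)) * real (card G choose card H)
    \<le> real (card (embeddings (\<Union>G) H G)) * real (t choose card H)"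
proof -
  obtain S where S: "S \<subseteq> G" "card S = t"
    and few: "card (embeddings (\<Union>G) H S) * (card G choose card H) \<le> card (embeddings (\<Union>G) H G) * (t choose card H)"
    using exists_subset_few_embeddings[OF hH fG fg tG] by blast
  have "real t - real (ex_hyp G H) \<le> real (card (embeddings (\<Union>G) H S))"
    using card_diff_card_embeddings_le_ex_hyp[OF hH Hne fG fg S(1)] S(2) by linarith
  then have "(real t - real (ex_hyp G H)) * real (card G choose card H)
      \<le> real (card (embeddings (\<Union>G) H S)) * real (card G choose card H)"
    by (rule mult_right_mono) simp
  also have "\<dots> \<le> real (card (embeddings (\<Union>G) H G)) * real (t choose card H)"
    using few by (simp flip: of_nat_mult)
  finally show ?thesis .
qed

lemma ex_hyp_sampling_bound:
  fixes H :: "'b set set" and G :: "'a set set"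
  assumes hH: "hypergraph H" and Hne: "H \<noteq> {}" and fG: "finite G" and fg: "\<And>g. g \<in> G \<Longrightarrow> finite g"
    and HG: "card H \<le> card G" and tG: "t \<le> card G"
  shows "real t - (real (card H) * edge_power_sum H) ^ card H * real t ^ card H
      * real (card G) powr (frac_cover_number H - real (card H)) \<le> real (ex_hyp G H)"
proof -
  define s where "s = card H"
  define m where "m = real (card G)"
  define K where "K = edge_power_sum H"
  define \<rho> where "\<rho> = frac_cover_number H"
  define x where "x = real t - real (ex_hyp G H)"
  have s: "s \<ge> 1"
    using hH Hne by (simp add: s_def hypergraph_def Suc_le_eq card_gt_0_iff)
  have m: "m \<ge> 1"
    using HG s by (simp add: m_def s_def)
  have K: "K \<ge> 1"
    unfolding K_def by (rule edge_power_sum_ge_one[OF hH Hne])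
  show ?thesis
  proof (cases "x \<le> 0")
    case True
    have "0 \<le> (real s * K) ^ s * real t ^ s * m powr (\<rho> - s)"
      using K by simp
    then show ?thesis
      using True by (simp add: x_def s_def K_def m_def \<rho>_def)
  next
    case False
    have "x * (m / s) ^ s \<le> x * real (card G choose s)"
      using binomial_ge_n_over_k_pow_k[of s "card G"] HG False by (simp add: m_def s_def)
    also have "\<dots> \<le> real (card (embeddings (\<Union>G) H G)) * real (t choose s)"
      unfolding x_def s_def by (rule ex_hyp_deletion_bound[OF hH Hne fG fg tG])
    also have "\<dots> \<le> K ^ s * m powr \<rho> * real t ^ s"
    proof (rule mult_mono)
      show "real (card (embeddings (\<Union>G) H G)) \<le> K ^ s * m powr \<rho>"
        unfolding K_def s_def m_def \<rho>_def by (rule card_embeddings_le_frac_cover_number[OF hH Hne fG fg])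
      show "real (t choose s) \<le> real t ^ s"
        by (cases "s \<le> t") (simp_all add: binomial_le_pow binomial_eq_0 not_le flip: of_nat_power)
    qed (use K in auto)
    finally have "x \<le> K ^ s * m powr \<rho> * real t ^ s / (m / s) ^ s"
      using m s by (simp add: le_divide_eq)
    also have "\<dots> = (s * K) ^ s * real t ^ s * m powr (\<rho> - s)"
    proof -
      have "m powr (\<rho> - s) = m powr \<rho> / m ^ s"
        using m by (simp add: powr_diff powr_realpow)
      then show ?thesis
        using m s by (simp add: power_divide power_mult_distrib)
    qed
    finally show ?thesis
      by (simp add: x_def s_def K_def m_def \<rho>_def)
  qed
qed

lemma sampling_term_le_half:
  fixes m t L \<rho> :: real and s :: nat
  assumes m: "m \<ge> 1" and L: "L > 0" and s: "s \<ge> 2" and t: "0 \<le> t"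
    and t_le: "t \<le> m powr ((real s - \<rho>) / (real s - 1)) / (2 * L) powr (1 / (real s - 1))"
  shows "L * t ^ s * m powr (\<rho> - s) \<le> t / 2"
proof -
  have s': "real (s - 1) = real s - 1"
    using s by simp
  have "t ^ (s - 1) \<le> (m powr ((s - \<rho>) / (real s - 1)) / (2 * L) powr (1 / (real s - 1))) ^ (s - 1)"
    using t t_le by (intro power_mono) auto
  also have "\<dots> = m powr (s - \<rho>) / (2 * L)"
    using m L s by (simp add: power_divide powr_power s')
  finally have "L * t ^ (s - 1) * m powr (\<rho> - s) \<le> L * (m powr (s - \<rho>) / (2 * L)) * m powr (\<rho> - s)"
    using L by (intro mult_right_mono mult_left_mono) auto
  also have "\<dots> = 1 / 2"
    using m L by (simp add: powr_add[symmetric])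
  finally have "t * (L * t ^ (s - 1) * m powr (\<rho> - s)) \<le> t * (1 / 2)"
    using t by (rule mult_left_mono)
  moreover have "t ^ s = t * t ^ (s - 1)"
    using s by (cases s) auto
  ultimately show ?thesis
    by (simp add: mult_ac)
qed

lemma frac_cover_number_less_card:
  assumes hH: "hypergraph H" and \<rho>_lt: "frac_cover_number H < real (card H)"
  shows "H \<noteq> {}" and "1 \<le> frac_cover_number H" and "card H \<ge> 2"
proof -
  show Hne: "H \<noteq> {}"
    using \<rho>_lt by (auto simp: frac_cover_number_empty)
  show "1 \<le> frac_cover_number H"
    by (rule frac_cover_number_ge_one[OF hH Hne])
  with \<rho>_lt show "card H \<ge> 2"
    by linarith
qed

definition deletion_constant :: "'b set set \<Rightarrow> real" where
  "deletion_constant H = (2 * (real (card H) * edge_power_sum H) ^ card H) powr (1 / (real (card H) - 1))"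

lemma deletion_constant_ge_one:
  assumes hH: "hypergraph H" and "card H \<ge> 2"
  shows "deletion_constant H \<ge> 1"
proof -
  have "H \<noteq> {}"
    using assms(2) by auto
  then have K: "1 \<le> edge_power_sum H"
    by (rule edge_power_sum_ge_one[OF hH])
  moreover from this have "edge_power_sum H \<le> real (card H) * edge_power_sum H"
    using assms(2) by (simp add: mult_le_cancel_right1)
  ultimately have "1 \<le> (real (card H) * edge_power_sum H) ^ card H"
    by (intro one_le_power) linarith
  then show ?thesis
    unfolding deletion_constant_def using assms(2) by (intro ge_one_powr_ge_zero) auto
qed

text \<open>Deletion method for a random sample of t \<approx> m^\<alpha> / D edges: the expected number of
  surviving copies is at most t / 2.\<close>
lemma ex_hyp_lower_bound:
  fixes H :: "'b set set" and G :: "'a set set"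
  assumes hH: "hypergraph H" and \<rho>_lt: "frac_cover_number H < real (card H)"
    and fG: "finite G" and fg: "\<And>g. g \<in> G \<Longrightarrow> finite g"
  shows "real (card G) powr ((real (card H) - frac_cover_number H) / (real (card H) - 1))
    \<le> deletion_constant H * (2 * real (ex_hyp G H) + 1)"
proof -
  define s where "s = card H"
  define \<rho> where "\<rho> = frac_cover_number H"
  define m where "m = real (card G)"
  define L where "L = (real s * edge_power_sum H) ^ s"
  define D where "D = deletion_constant H"
  define \<alpha> where "\<alpha> = (real s - \<rho>) / (real s - 1)"
  define x where "x = m powr \<alpha> / D"
  define N where "N = card (embeddings (\<Union>G) H G)"
  note Hne = frac_cover_number_less_card(1)[OF hH \<rho>_lt]
  have \<rho>: "1 \<le> \<rho>" "\<rho> < s" and s: "s \<ge> 2"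
    using frac_cover_number_less_card[OF hH \<rho>_lt] \<rho>_lt by (simp_all add: \<rho>_def s_def)
  have D: "D \<ge> 1"
    unfolding D_def s_def by (rule deletion_constant_ge_one[OF hH s[unfolded s_def]])
  have \<alpha>: "0 \<le> \<alpha>" "\<alpha> \<le> 1"
    using \<rho> s by (simp_all add: \<alpha>_def divide_le_eq)
  have x_le_m: "x \<le> m"
  proof (cases "m = 0")
    case False
    then have "m \<ge> 1"
      by (simp add: m_def)
    then have "m powr \<alpha> \<le> m"
      using \<alpha> powr_mono[of \<alpha> 1 m] by simp
    moreover have "m powr \<alpha> / D \<le> m powr \<alpha> / 1"
      using D by (intro divide_left_mono) auto
    ultimately show ?thesis
      by (simp add: x_def)
  qed (simp add: x_def)
  have "x \<le> 2 * real (ex_hyp G H) + 1"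
  proof (cases "N = 0")
    case True
    then show ?thesis
      using card_diff_card_embeddings_le_ex_hyp[OF hH Hne fG fg subset_refl] x_le_m
      by (simp add: N_def m_def)
  next
    case False
    then obtain f where f: "f \<in> embeddings (\<Union>G) H G"
      unfolding N_def by (metis card.empty ex_in_conv)
    then have "(\<lambda>e. f ` e) ` H \<subseteq> G"
      by (auto simp: embeddings_def)
    then have HG: "card H \<le> card G"
      using card_edge_image_embedding[OF f] card_mono[OF fG] by metis
    define t where "t = nat \<lfloor>x\<rfloor>"
    have "0 \<le> x"
      using D by (simp add: x_def)
    then have t: "real t \<le> x" "x < real t + 1"
      by (simp_all add: t_def)
    have m: "m \<ge> 1"
      using HG s by (simp add: m_def s_def)
    have L: "L > 0"
      using edge_power_sum_ge_one[OF hH Hne] s by (simp add: L_def)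
    have "L * real t ^ s * m powr (\<rho> - s) \<le> real t / 2"
      using t(1) L by (intro sampling_term_le_half[OF m L s])
        (simp_all add: x_def D_def \<alpha>_def deletion_constant_def L_def s_def)
    moreover have "real t - L * real t ^ s * m powr (\<rho> - s) \<le> real (ex_hyp G H)"
      using ex_hyp_sampling_bound[OF hH Hne fG fg HG, of t] t(1) x_le_m
      by (simp add: L_def s_def m_def \<rho>_def)
    ultimately show ?thesis
      using t by linarith
  qed
  then have "m powr \<alpha> \<le> D * (2 * real (ex_hyp G H) + 1)"
    using D by (simp add: x_def divide_le_eq mult.commute)
  then show ?thesis
    by (simp add: m_def \<alpha>_def D_def s_def \<rho>_def)
qed

theorem proposition2p8:
  fixes H :: "'b set set"
  assumes "hypergraph H"
    and "frac_cover_number H < real (card H)"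
  shows "\<exists>c::real. \<forall>k::nat. k > 0 \<longrightarrow>
           extremal_E H k \<le> ereal (c * real k powr
             ((real (card H) - 1) / (real (card H) - frac_cover_number H)))"
proof -
  define \<rho> where "\<rho> = frac_cover_number H"
  define \<alpha> where "\<alpha> = (real (card H) - \<rho>) / (real (card H) - 1)"
  define \<beta> where "\<beta> = (real (card H) - 1) / (real (card H) - \<rho>)"
  define D where "D = deletion_constant H"
  have s: "card H \<ge> 2" and \<rho>: "\<rho> < card H"
    using frac_cover_number_less_card[OF assms] assms(2) by (simp_all add: \<rho>_def)
  have D: "D \<ge> 1"
    unfolding D_def by (rule deletion_constant_ge_one[OF assms(1) s])
  have \<beta>: "\<beta> > 0" and inverse: "\<alpha> * \<beta> = 1"
    using s \<rho> by (auto simp: \<alpha>_def \<beta>_def)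
  have "extremal_E H k \<le> ereal ((2 * D) powr \<beta> * real k powr \<beta>)" for k
    unfolding extremal_E_def
  proof (rule Sup_least, clarify)
    fix G :: "nat set set" assume G: "hypergraph G" "ex_hyp G H < k"
    define m where "m = real (card G)"
    have "finite G" "\<And>g. g \<in> G \<Longrightarrow> finite g"
      using G(1) by (auto simp: hypergraph_def)
    from ex_hyp_lower_bound[OF assms this]
    have "m powr \<alpha> \<le> D * (2 * real (ex_hyp G H) + 1)"
      by (simp add: m_def \<alpha>_def \<rho>_def D_def)
    also have "\<dots> \<le> 2 * D * real k"
      using G(2) D by (simp add: mult_left_mono)
    finally have "(m powr \<alpha>) powr \<beta> \<le> (2 * D * real k) powr \<beta>"
      using \<beta> by (intro powr_mono2) auto
    moreover have "(m powr \<alpha>) powr \<beta> = m"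
      unfolding powr_powr inverse by (simp add: m_def)
    ultimately have "m \<le> (2 * D * real k) powr \<beta>"
      by simp
    then show "ereal m \<le> ereal ((2 * D) powr \<beta> * real k powr \<beta>)"
      using D by (simp add: powr_mult)
  qed
  then show ?thesis
    by (auto simp: \<beta>_def \<rho>_def)
qed

end
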